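(* If $G$ is a connected graph on at least two vertices and $H$ is any graph, then $\chi_{\mu_2}(G\circ H)\le \theta(G^{[\natural 2]})\le \theta\big((G\circ H)^{[\natural 2]}\big)$. Moreover, both inequalities are sharp (each is attained with equality for suitable such $G$ and $H$).
   Context: The lexicographic product $G\circ H$ has vertex set $V(G)\times V(H)$, with $(g,h)$ adjacent to $(g',h')$ iff $gg'\in E(G)$, or $g=g'$ and $hh'\in E(H)$. The exact distance-$2$ graph $X^{[\natural 2]}$ has vertex set $V(X)$, two vertices being adjacent iff their distance in $X$ equals $2$. $\theta(X)$ is the clique cover number (minimum number of cliques partitioning $V(X)$). A set $M\subseteq V(X)$ is a $2$-distance mutual-visibility set if for every two vertices $u,v\in M$ there exists a shortest $u,v$-path of length at most $2$ none of whose internal vertices lies in $M$. $\chi_{\mu_2}(X)$ is the minimum cardinality of a partition of $V(X)$ into $2$-distance mutual-visibility sets. *)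

theory Defs
  imports Main
begin

record 'a sgraph =
  verts :: "'a set"
  adj :: "'a \<Rightarrow> 'a \<Rightarrow> bool"

definition sgraph :: "('a, 'b) sgraph_scheme \<Rightarrow> bool" where
  "sgraph G \<longleftrightarrow> finite (verts G) \<and> verts G \<noteq> {}
     \<and> (\<forall>u v. adj G u v \<longrightarrow> u \<in> verts G \<and> v \<in> verts G)
     \<and> (\<forall>u v. adj G u v \<longrightarrow> adj G v u)
     \<and> (\<forall>v. \<not> adj G v v)"

text \<open>A walk from u to v given as its vertex list; its length is length xs - 1.\<close>
definition is_walk :: "('a, 'b) sgraph_scheme \<Rightarrow> 'a \<Rightarrow> 'a \<Rightarrow> 'a list \<Rightarrow> bool" where
  "is_walk G u v xs \<longleftrightarrow> xs \<noteq> [] \<and> hd xs = u \<and> last xs = v \<and> set xs \<subseteq> verts G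
     \<and> (\<forall>i. Suc i < length xs \<longrightarrow> adj G (xs ! i) (xs ! Suc i))"

definition connected :: "('a, 'b) sgraph_scheme \<Rightarrow> bool" where
  "connected G \<longleftrightarrow> (\<forall>u\<in>verts G. \<forall>v\<in>verts G. \<exists>xs. is_walk G u v xs)"

definition dist_eq :: "('a, 'b) sgraph_scheme \<Rightarrow> 'a \<Rightarrow> 'a \<Rightarrow> nat \<Rightarrow> bool" where
  "dist_eq G u v k \<longleftrightarrow> (\<exists>xs. is_walk G u v xs \<and> length xs = Suc k)
     \<and> (\<forall>m<k. \<not> (\<exists>xs. is_walk G u v xs \<and> length xs = Suc m))"

definition lex_prod :: "('a, 'c) sgraph_scheme \<Rightarrow> ('b, 'd) sgraph_scheme \<Rightarrow> ('a \<times> 'b) sgraph" where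
  "lex_prod G H = \<lparr> verts = verts G \<times> verts H,
     adj = (\<lambda>(g, h) (g', h'). (g, h) \<in> verts G \<times> verts H \<and> (g', h') \<in> verts G \<times> verts H
              \<and> (adj G g g' \<or> (g = g' \<and> adj H h h'))) \<rparr>"

definition exact_dist2 :: "('a, 'b) sgraph_scheme \<Rightarrow> 'a sgraph" where
  "exact_dist2 X = \<lparr> verts = verts X,
     adj = (\<lambda>u v. u \<in> verts X \<and> v \<in> verts X \<and> dist_eq X u v 2) \<rparr>"

definition is_partition :: "'a set \<Rightarrow> 'a set set \<Rightarrow> bool" where
  "is_partition V P \<longleftrightarrow> \<Union>P = V \<and> {} \<notin> P \<and> (\<forall>A\<in>P. \<forall>B\<in>P. A \<noteq> B \<longrightarrow> A \<inter> B = {})"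

definition is_clique :: "('a, 'b) sgraph_scheme \<Rightarrow> 'a set \<Rightarrow> bool" where
  "is_clique X C \<longleftrightarrow> C \<subseteq> verts X \<and> (\<forall>u\<in>C. \<forall>v\<in>C. u \<noteq> v \<longrightarrow> adj X u v)"

definition theta :: "('a, 'b) sgraph_scheme \<Rightarrow> nat" where
  "theta X = (LEAST n. \<exists>P. is_partition (verts X) P \<and> (\<forall>C\<in>P. is_clique X C) \<and> card P = n)"

definition mv2_set :: "('a, 'b) sgraph_scheme \<Rightarrow> 'a set \<Rightarrow> bool" where
  "mv2_set X M \<longleftrightarrow> M \<subseteq> verts X \<and>
     (\<forall>u\<in>M. \<forall>v\<in>M. \<exists>k\<le>2. dist_eq X u v k \<and>
        (\<exists>xs. is_walk X u v xs \<and> length xs = Suc k \<and> set (butlast (tl xs)) \<inter> M = {}))"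

definition chi_mu2 :: "('a, 'b) sgraph_scheme \<Rightarrow> nat" where
  "chi_mu2 X = (LEAST n. \<exists>P. is_partition (verts X) P \<and> (\<forall>M\<in>P. mv2_set X M) \<and> card P = n)"

end

theory Submission
  imports Defs
begin

text \<open>For a clique \<open>C\<close> of the exact distance-2 graph \<open>G\<^sup>[\<natural>2]\<close>, the set \<open>C \<times> V(H)\<close> is a
2-distance mutual-visibility set of \<open>G \<circ> H\<close>: two of its vertices that are neither equal nor
adjacent are at distance 2 with a common neighbour \<open>(x, h)\<close>, where \<open>x\<close> is adjacent to a vertex
of \<open>C\<close> (such an \<open>x\<close> exists even for vertices sharing their first coordinate, since a connected
\<open>G\<close> with two vertices has no isolated vertex) and hence \<open>x \<notin> C\<close>. So every clique cover of
\<open>G\<^sup>[\<natural>2]\<close> yields a visibility partition of \<open>G \<circ> H\<close> of the same size. Conversely, for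
\<open>g \<noteq> g'\<close> the vertices \<open>(g, h)\<close> and \<open>(g', h)\<close> are at distance 2 in \<open>G \<circ> H\<close> exactly when
\<open>g\<close> and \<open>g'\<close> are at distance 2 in \<open>G\<close>, so slicing a clique cover of \<open>(G \<circ> H)\<^sup>[\<natural>2]\<close>
at a fixed \<open>h\<close> gives a clique cover of \<open>G\<^sup>[\<natural>2]\<close>. Both bounds are attained for
\<open>G = K\<^sub>2\<close>, whose exact distance-2 graph is edgeless.\<close>

section \<open>Short walks and distances\<close>

lemma is_walk_length_0_iff:
  "is_walk X u v xs \<and> length xs = Suc 0 \<longleftrightarrow> xs = [u] \<and> u = v \<and> u \<in> verts X"
  by (auto simp: is_walk_def length_Suc_conv)

lemma is_walk_length_1_iff:
  "is_walk X u v xs \<and> length xs = Suc (Suc 0) \<longleftrightarrow>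
     xs = [u, v] \<and> adj X u v \<and> u \<in> verts X \<and> v \<in> verts X"
  by (auto simp: is_walk_def length_Suc_conv less_Suc_eq)

lemma is_walk_length_2_iff:
  "is_walk X u v xs \<and> length xs = Suc (Suc (Suc 0)) \<longleftrightarrow>
     (\<exists>w. xs = [u, w, v] \<and> adj X u w \<and> adj X w v \<and> u \<in> verts X \<and> w \<in> verts X \<and> v \<in> verts X)"
  by (auto simp: is_walk_def length_Suc_conv less_Suc_eq nth_Cons split: nat.splits)

lemma walk_length_0_iff:
  "(\<exists>xs. is_walk X u v xs \<and> length xs = Suc 0) \<longleftrightarrow> u = v \<and> u \<in> verts X"
  using is_walk_length_0_iff[of X u v] by blast

lemma walk_length_1_iff:
  "(\<exists>xs. is_walk X u v xs \<and> length xs = Suc (Suc 0)) \<longleftrightarrow> adj X u v \<and> u \<in> verts X \<and> v \<in> verts X"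
  using is_walk_length_1_iff[of X u v] by blast

lemma dist_eq_0_iff: "dist_eq X u v 0 \<longleftrightarrow> u = v \<and> u \<in> verts X"
  unfolding dist_eq_def walk_length_0_iff by simp

lemma dist_eq_1_iff:
  "dist_eq X u v (Suc 0) \<longleftrightarrow> adj X u v \<and> u \<in> verts X \<and> v \<in> verts X \<and> u \<noteq> v"
  unfolding dist_eq_def walk_length_1_iff by (auto simp: walk_length_0_iff)

lemma dist_eq_2_iff:
  "dist_eq X u v 2 \<longleftrightarrow> (\<exists>w\<in>verts X. adj X u w \<and> adj X w v) \<and> u \<in> verts X \<and> v \<in> verts X
     \<and> u \<noteq> v \<and> \<not> adj X u v"
proof -
  have below_2: "(\<forall>m<(2::nat). P m) \<longleftrightarrow> P 0 \<and> P (Suc 0)" for P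
    by (auto simp: less_2_cases_iff)
  have "(\<exists>xs. is_walk X u v xs \<and> length xs = Suc 2) \<longleftrightarrow>
      (\<exists>w\<in>verts X. adj X u w \<and> adj X w v) \<and> u \<in> verts X \<and> v \<in> verts X"
    using is_walk_length_2_iff[of X u v] by (auto simp: numeral_2_eq_2)
  then show ?thesis
    unfolding dist_eq_def below_2 walk_length_0_iff walk_length_1_iff by blast
qed

lemma walk_length_2_avoiding_iff:
  "(\<exists>xs. is_walk X u v xs \<and> length xs = Suc 2 \<and> set (butlast (tl xs)) \<inter> M = {}) \<longleftrightarrow>
     (\<exists>w\<in>verts X - M. adj X u w \<and> adj X w v) \<and> u \<in> verts X \<and> v \<in> verts X"
proof
  assume "\<exists>xs. is_walk X u v xs \<and> length xs = Suc 2 \<and> set (butlast (tl xs)) \<inter> M = {}"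
  then obtain xs where xs: "is_walk X u v xs" "length xs = Suc (Suc (Suc 0))"
    "set (butlast (tl xs)) \<inter> M = {}"
    by (auto simp: numeral_2_eq_2)
  then have "\<exists>w. xs = [u, w, v] \<and> adj X u w \<and> adj X w v \<and> u \<in> verts X \<and> w \<in> verts X \<and> v \<in> verts X"
    using is_walk_length_2_iff[of X u v xs] by blast
  then show "(\<exists>w\<in>verts X - M. adj X u w \<and> adj X w v) \<and> u \<in> verts X \<and> v \<in> verts X"
    using xs(3) by auto
next
  assume "(\<exists>w\<in>verts X - M. adj X u w \<and> adj X w v) \<and> u \<in> verts X \<and> v \<in> verts X"
  then obtain w where w: "w \<in> verts X" "w \<notin> M" "adj X u w" "adj X w v" "u \<in> verts X" "v \<in> verts X"
    by blast
  then have "is_walk X u v [u, w, v] \<and> length [u, w, v] = Suc (Suc (Suc 0))"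
    using is_walk_length_2_iff[of X u v "[u, w, v]"] by blast
  then show "\<exists>xs. is_walk X u v xs \<and> length xs = Suc 2 \<and> set (butlast (tl xs)) \<inter> M = {}"
    using w(2) by (intro exI[of _ "[u, w, v]"]) (simp add: numeral_2_eq_2)
qed

definition mv2_visible :: "('a, 'b) sgraph_scheme \<Rightarrow> 'a set \<Rightarrow> 'a \<Rightarrow> 'a \<Rightarrow> bool" where
  "mv2_visible X M u v \<longleftrightarrow> u = v \<or> adj X u v
     \<or> (dist_eq X u v 2 \<and> (\<exists>w\<in>verts X - M. adj X u w \<and> adj X w v))"

lemma mv2_visible_via:
  "dist_eq X u v 2 \<Longrightarrow> w \<in> verts X - M \<Longrightarrow> adj X u w \<Longrightarrow> adj X w v \<Longrightarrow> mv2_visible X M u v"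
  unfolding mv2_visible_def by blast

lemma mv2_set_iff: "mv2_set X M \<longleftrightarrow> M \<subseteq> verts X \<and> (\<forall>u\<in>M. \<forall>v\<in>M. mv2_visible X M u v)"
proof -
  define visible where "visible u v k \<longleftrightarrow> dist_eq X u v k \<and>
    (\<exists>xs. is_walk X u v xs \<and> length xs = Suc k \<and> set (butlast (tl xs)) \<inter> M = {})" for u v k
  have visible_0: "visible u v 0 \<longleftrightarrow> u = v" if "u \<in> verts X" for u v
    using that is_walk_length_0_iff[of X u v] unfolding visible_def dist_eq_0_iff by force
  have visible_1: "visible u v 1 \<longleftrightarrow> adj X u v \<and> u \<noteq> v" if "u \<in> verts X" "v \<in> verts X" for u v
    using that is_walk_length_1_iff[of X u v] unfolding visible_def One_nat_def dist_eq_1_iff by force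
  have visible_2: "visible u v 2 \<longleftrightarrow> dist_eq X u v 2 \<and> (\<exists>w\<in>verts X - M. adj X u w \<and> adj X w v)" for u v
    unfolding visible_def walk_length_2_avoiding_iff dist_eq_2_iff by blast
  have visible_le_2: "(\<exists>k\<le>2. visible u v k) \<longleftrightarrow> visible u v 0 \<or> visible u v 1 \<or> visible u v 2" for u v
    by (auto simp: le_Suc_eq numeral_2_eq_2)
  have visible_iff: "(\<exists>k\<le>2. visible u v k) \<longleftrightarrow> mv2_visible X M u v"
    if "u \<in> verts X" "v \<in> verts X" for u v
    using visible_le_2[of u v] visible_0[of u v, OF that(1)] visible_1[OF that] visible_2[of u v]
    unfolding mv2_visible_def by argo
  show ?thesis
    unfolding mv2_set_def visible_def[symmetric]
  proof (rule conj_cong[OF refl])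
    assume "M \<subseteq> verts X"
    then show "(\<forall>u\<in>M. \<forall>v\<in>M. \<exists>k\<le>2. visible u v k) \<longleftrightarrow> (\<forall>u\<in>M. \<forall>v\<in>M. mv2_visible X M u v)"
      using visible_iff by (intro ball_cong refl) blast
  qed
qed

lemma mv2_set_verts_imp_adj:
  assumes "mv2_set X (verts X)" "u \<in> verts X" "v \<in> verts X"
  shows "u = v \<or> adj X u v"
  using assms unfolding mv2_set_iff mv2_visible_def by blast

lemma sgraph_adjD:
  assumes "sgraph G" "adj G u v"
  shows "u \<in> verts G" "v \<in> verts G" "adj G v u" "u \<noteq> v"
  using assms unfolding sgraph_def by metis+

lemma ex_adj_if_connected:
  assumes "connected G" "card (verts G) \<ge> 2" "g \<in> verts G"
  shows "\<exists>x. adj G g x"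
proof -
  have "\<not> card (verts G) \<le> Suc 0" "finite (verts G)"
    using assms(2) by (auto intro: card_ge_0_finite)
  then obtain g' where g': "g' \<in> verts G" "g' \<noteq> g"
    using assms(3) card_le_Suc0_iff_eq by blast
  then obtain xs where xs: "is_walk G g g' xs"
    using assms(1,3) unfolding connected_def by blast
  then have "xs \<noteq> []" "hd xs = g" "last xs = g'"
    by (simp_all add: is_walk_def)
  then have "tl xs \<noteq> []"
    using g'(2) by (metis last_ConsL list.collapse)
  then have "adj G (xs ! 0) (xs ! Suc 0)"
    using xs unfolding is_walk_def
    by (metis length_greater_0_conv length_tl less_diff_conv plus_1_eq_Suc add.commute)
  then show ?thesis
    using \<open>xs \<noteq> []\<close> \<open>hd xs = g\<close> by (metis hd_conv_nth)
qed

section \<open>Lexicographic product and exact distance-2 graph\<close>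

lemma verts_lex_prod [simp]: "verts (lex_prod G H) = verts G \<times> verts H"
  by (simp add: lex_prod_def)

lemma adj_lex_prod:
  "adj (lex_prod G H) (g, h) (g', h') \<longleftrightarrow> g \<in> verts G \<and> h \<in> verts H \<and> g' \<in> verts G \<and> h' \<in> verts H
     \<and> (adj G g g' \<or> g = g' \<and> adj H h h')"
  by (simp add: lex_prod_def)

lemma verts_exact_dist2 [simp]: "verts (exact_dist2 X) = verts X"
  by (simp add: exact_dist2_def)

lemma adj_exact_dist2: "adj (exact_dist2 X) u v \<longleftrightarrow> u \<in> verts X \<and> v \<in> verts X \<and> dist_eq X u v 2"
  by (simp add: exact_dist2_def)

lemma dist_eq_2_lex_prod_fst_neq:
  assumes "g \<noteq> g'" "h \<in> verts H" "h' \<in> verts H"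
  shows "dist_eq (lex_prod G H) (g, h) (g', h') 2 \<longleftrightarrow> dist_eq G g g' 2"
proof
  assume "dist_eq (lex_prod G H) (g, h) (g', h') 2"
  then obtain a b where "adj (lex_prod G H) (g, h) (a, b)" "adj (lex_prod G H) (a, b) (g', h')"
    "\<not> adj (lex_prod G H) (g, h) (g', h')" "g \<in> verts G" "g' \<in> verts G"
    unfolding dist_eq_2_iff by auto
  then show "dist_eq G g g' 2"
    unfolding dist_eq_2_iff using assms by (auto simp: adj_lex_prod)
next
  assume "dist_eq G g g' 2"
  then obtain w where "w \<in> verts G" "adj G g w" "adj G w g'" "\<not> adj G g g'" "g \<in> verts G" "g' \<in> verts G"
    unfolding dist_eq_2_iff by auto
  then have "(w, h) \<in> verts (lex_prod G H)" "adj (lex_prod G H) (g, h) (w, h)"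
    "adj (lex_prod G H) (w, h) (g', h')" "\<not> adj (lex_prod G H) (g, h) (g', h')"
    using assms by (auto simp: adj_lex_prod)
  then show "dist_eq (lex_prod G H) (g, h) (g', h') 2"
    unfolding dist_eq_2_iff using assms \<open>g \<in> verts G\<close> \<open>g' \<in> verts G\<close> by auto
qed

lemma dist_eq_2_lex_prod_fst_eq:
  assumes "sgraph G" "adj G g x" "h \<in> verts H" "h' \<in> verts H" "h \<noteq> h'" "\<not> adj H h h'"
  shows "dist_eq (lex_prod G H) (g, h) (g, h') 2"
proof -
  have "g \<in> verts G" "x \<in> verts G" "adj G x g"
    using sgraph_adjD[OF assms(1,2)] by blast+
  moreover have "\<not> adj G g g"
    using assms(1) unfolding sgraph_def by blast
  ultimately have "(x, h) \<in> verts (lex_prod G H)" "adj (lex_prod G H) (g, h) (x, h)"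
    "adj (lex_prod G H) (x, h) (g, h')" "\<not> adj (lex_prod G H) (g, h) (g, h')"
    using assms by (auto simp: adj_lex_prod)
  then show ?thesis
    unfolding dist_eq_2_iff using assms(3-5) \<open>g \<in> verts G\<close> by auto
qed

lemma mv2_set_clique_times_verts:
  assumes G: "sgraph G" and no_isolated: "\<forall>g\<in>verts G. \<exists>x. adj G g x"
    and C: "is_clique (exact_dist2 G) C"
  shows "mv2_set (lex_prod G H) (C \<times> verts H)"
proof -
  have CV: "C \<subseteq> verts G" using C by (simp add: is_clique_def)
  have C_dist: "dist_eq G u v 2" if "u \<in> C" "v \<in> C" "u \<noteq> v" for u v
    using C that unfolding is_clique_def adj_exact_dist2 by blast
  have nbr_notin_C: "x \<notin> C" if "g \<in> C" "adj G g x" for g x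
  proof -
    have "g \<noteq> x" using sgraph_adjD(4)[OF G that(2)] .
    then show ?thesis using C_dist[of g x] that by (auto simp: dist_eq_2_iff)
  qed
  have "mv2_visible (lex_prod G H) (C \<times> verts H) (g, h) (g', h')"
    if gh: "g \<in> C" "g' \<in> C" "h \<in> verts H" "h' \<in> verts H" for g g' h h'
  proof -
    have "g \<in> verts G" "g' \<in> verts G" using gh CV by auto
    consider "g \<noteq> g'" | "g = g'" "h = h' \<or> adj H h h'" | "g = g'" "h \<noteq> h'" "\<not> adj H h h'"
      by blast
    then show ?thesis
    proof cases
      case 1
      then obtain w where w: "w \<in> verts G" "adj G g w" "adj G w g'"
        using C_dist[OF gh(1,2)] unfolding dist_eq_2_iff by blast
      show ?thesis
      proof (rule mv2_visible_via[of _ _ _ "(w, h)"])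
        show "dist_eq (lex_prod G H) (g, h) (g', h') 2"
          using dist_eq_2_lex_prod_fst_neq[OF 1 gh(3,4), of G] C_dist[OF gh(1,2) 1] by simp
      qed (use w gh nbr_notin_C \<open>g \<in> verts G\<close> \<open>g' \<in> verts G\<close> in \<open>simp_all add: adj_lex_prod\<close>)
    next
      case 2
      then show ?thesis
        using gh \<open>g \<in> verts G\<close> by (auto simp: mv2_visible_def adj_lex_prod)
    next
      case 3
      obtain x where x: "adj G g x" using no_isolated \<open>g \<in> verts G\<close> by blast
      then have "x \<in> verts G" "adj G x g" using sgraph_adjD[OF G] by blast+
      then show ?thesis
        using 3 x gh nbr_notin_C \<open>g \<in> verts G\<close> dist_eq_2_lex_prod_fst_eq[OF G x gh(3,4)]
        by (intro mv2_visible_via[of _ _ _ "(x, h)"]) (simp_all add: adj_lex_prod)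
    qed
  qed
  then show ?thesis
    unfolding mv2_set_iff using CV by auto
qed

lemma clique_exact_dist2_slice:
  assumes "is_clique (exact_dist2 (lex_prod G H)) X" "h \<in> verts H"
  shows "is_clique (exact_dist2 G) {g. (g, h) \<in> X}"
  unfolding is_clique_def
proof (intro conjI ballI impI)
  show "{g. (g, h) \<in> X} \<subseteq> verts (exact_dist2 G)"
    using assms(1) by (auto simp: is_clique_def)
  fix u v assume "u \<in> {g. (g, h) \<in> X}" "v \<in> {g. (g, h) \<in> X}" "u \<noteq> v"
  then have "adj (exact_dist2 (lex_prod G H)) (u, h) (v, h)"
    using assms(1) unfolding is_clique_def by blast
  then show "adj (exact_dist2 G) u v"
    using dist_eq_2_lex_prod_fst_neq[OF \<open>u \<noteq> v\<close> assms(2) assms(2), of G] by (simp add: adj_exact_dist2)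
qed

section \<open>Partitions, clique covers and visibility partitions\<close>

lemma is_partition_singletons: "is_partition V ((\<lambda>v. {v}) ` V)"
  by (auto simp: is_partition_def)

lemma finite_partition: "is_partition V P \<Longrightarrow> finite V \<Longrightarrow> finite P"
  unfolding is_partition_def by (metis finite_UnionD)

lemma partition_card_le_1:
  assumes "is_partition V P" "finite V" "V \<noteq> {}" "card P \<le> 1"
  shows "P = {V}"
proof -
  have "P \<noteq> {}" using assms(1,3) by (auto simp: is_partition_def)
  then have "card P = 1"
    using assms(4) finite_partition[OF assms(1,2)] by (simp add: card_gt_0_iff le_antisym Suc_le_eq)
  then obtain A where "P = {A}" by (rule card_1_singletonE)
  then show ?thesis using assms(1) by (auto simp: is_partition_def)
qed

lemma card_partition_into_singletons:
  assumes "is_partition V P" "finite V" "\<forall>A\<in>P. card A \<le> 1"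
  shows "card P = card V"
proof -
  have fin: "finite P" "\<forall>A\<in>P. finite A"
    using assms(1,2) finite_partition unfolding is_partition_def by (blast, meson Union_upper finite_subset)
  have "\<forall>A\<in>P. card A = 1"
    using assms(1,3) fin(2) by (auto simp: is_partition_def le_Suc_eq card_0_eq)
  moreover have "card V = sum card P"
    using assms(1) fin by (auto simp: is_partition_def pairwise_def disjnt_def intro!: card_Union_disjoint)
  ultimately show ?thesis by simp
qed

lemma is_partition_Times:
  assumes "is_partition A P" "B \<noteq> {}"
  shows "is_partition (A \<times> B) ((\<lambda>C. C \<times> B) ` P)"
  unfolding is_partition_def
proof (intro conjI ballI impI)
  show "\<Union> ((\<lambda>C. C \<times> B) ` P) = A \<times> B"
    using assms(1) by (auto simp: is_partition_def)
  have "C \<times> B \<noteq> {}" if "C \<in> P" for C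
    using that assms by (auto simp: is_partition_def)
  then show "{} \<notin> (\<lambda>C. C \<times> B) ` P" by blast
  fix X Y assume "X \<in> (\<lambda>C. C \<times> B) ` P" "Y \<in> (\<lambda>C. C \<times> B) ` P" "X \<noteq> Y"
  then show "X \<inter> Y = {}"
    using assms(1) unfolding is_partition_def by blast
qed

lemma card_partition_Times:
  assumes "is_partition A P" "B \<noteq> {}"
  shows "card ((\<lambda>C. C \<times> B) ` P) = card P"
  using assms by (intro card_image) (auto simp: inj_on_def is_partition_def times_eq_iff)

lemma is_partition_slice:
  assumes "is_partition (A \<times> B) Q" "b \<in> B"
  shows "is_partition A ((\<lambda>X. {a. (a, b) \<in> X}) ` Q - {{}})"
  unfolding is_partition_def
proof (intro conjI ballI impI)
  show "\<Union> ((\<lambda>X. {a. (a, b) \<in> X}) ` Q - {{}}) = A"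
  proof
    show "\<Union> ((\<lambda>X. {a. (a, b) \<in> X}) ` Q - {{}}) \<subseteq> A"
      using assms(1) unfolding is_partition_def by auto
    show "A \<subseteq> \<Union> ((\<lambda>X. {a. (a, b) \<in> X}) ` Q - {{}})"
    proof
      fix a assume "a \<in> A"
      then obtain X where "X \<in> Q" "(a, b) \<in> X"
        using assms unfolding is_partition_def by blast
      then show "a \<in> \<Union> ((\<lambda>X. {a. (a, b) \<in> X}) ` Q - {{}})" by blast
    qed
  qed
  show "{} \<notin> (\<lambda>X. {a. (a, b) \<in> X}) ` Q - {{}}" by blast
  fix S T assume "S \<in> (\<lambda>X. {a. (a, b) \<in> X}) ` Q - {{}}" "T \<in> (\<lambda>X. {a. (a, b) \<in> X}) ` Q - {{}}" "S \<noteq> T"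
  then obtain X Y where "X \<in> Q" "Y \<in> Q" "S = {a. (a, b) \<in> X}" "T = {a. (a, b) \<in> Y}" "X \<noteq> Y"
    by blast
  then show "S \<inter> T = {}"
    using assms(1) unfolding is_partition_def by blast
qed

lemma theta_le:
  "is_partition (verts X) P \<Longrightarrow> \<forall>C\<in>P. is_clique X C \<Longrightarrow> theta X \<le> card P"
  unfolding theta_def by (rule Least_le) blast

lemma theta_attained:
  obtains P where "is_partition (verts X) P" "\<forall>C\<in>P. is_clique X C" "card P = theta X"
proof -
  have "\<exists>P. is_partition (verts X) P \<and> (\<forall>C\<in>P. is_clique X C) \<and> card P = theta X"
    unfolding theta_def
    by (rule LeastI_ex) (use is_partition_singletons in \<open>auto simp: is_clique_def\<close>)
  then show ?thesis using that by blast
qed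

lemma theta_edgeless:
  assumes "finite (verts X)" "\<And>u v. \<not> adj X u v"
  shows "theta X = card (verts X)"
proof -
  obtain P where P: "is_partition (verts X) P" "\<forall>C\<in>P. is_clique X C" "card P = theta X"
    by (rule theta_attained)
  have "card C \<le> 1" if "C \<in> P" for C
  proof -
    have "C \<subseteq> verts X" "\<forall>u\<in>C. \<forall>v\<in>C. u = v"
      using P(2) that assms(2) unfolding is_clique_def by blast+
    then show ?thesis
      using assms(1) by (simp add: card_le_Suc0_iff_eq finite_subset)
  qed
  then show ?thesis using card_partition_into_singletons[OF P(1) assms(1)] P(3) by simp
qed

lemma chi_mu2_le:
  "is_partition (verts X) P \<Longrightarrow> \<forall>M\<in>P. mv2_set X M \<Longrightarrow> chi_mu2 X \<le> card P"
  unfolding chi_mu2_def by (rule Least_le) blast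

lemma chi_mu2_attained:
  obtains P where "is_partition (verts X) P" "\<forall>M\<in>P. mv2_set X M" "card P = chi_mu2 X"
proof -
  have "\<exists>P. is_partition (verts X) P \<and> (\<forall>M\<in>P. mv2_set X M) \<and> card P = chi_mu2 X"
    unfolding chi_mu2_def
    by (rule LeastI_ex) (use is_partition_singletons in \<open>auto simp: mv2_set_iff mv2_visible_def\<close>)
  then show ?thesis using that by blast
qed

lemma two_le_chi_mu2:
  assumes "finite (verts X)" "\<not> mv2_set X (verts X)"
  shows "2 \<le> chi_mu2 X"
proof (rule ccontr)
  assume "\<not> 2 \<le> chi_mu2 X"
  obtain P where P: "is_partition (verts X) P" "\<forall>M\<in>P. mv2_set X M" "card P = chi_mu2 X"
    by (rule chi_mu2_attained)
  have "verts X \<noteq> {}" using assms(2) by (auto simp: mv2_set_iff)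
  then have "P = {verts X}" using partition_card_le_1[OF P(1) assms(1)] P(3) \<open>\<not> 2 \<le> chi_mu2 X\<close> by simp
  then show False using P(2) assms(2) by simp
qed

lemma chi_mu2_lex_prod_le_theta_exact_dist2:
  assumes "sgraph G" "sgraph H" "connected G" "card (verts G) \<ge> 2"
  shows "chi_mu2 (lex_prod G H) \<le> theta (exact_dist2 G)"
proof -
  obtain P where P: "is_partition (verts G) P" "\<forall>C\<in>P. is_clique (exact_dist2 G) C"
    "card P = theta (exact_dist2 G)"
    by (rule theta_attained[of "exact_dist2 G"]) simp
  have "verts H \<noteq> {}" using assms(2) by (simp add: sgraph_def)
  moreover have "\<forall>M\<in>(\<lambda>C. C \<times> verts H) ` P. mv2_set (lex_prod G H) M"
    using P(2) mv2_set_clique_times_verts[OF assms(1)] ex_adj_if_connected[OF assms(3,4)] by blast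
  ultimately have "chi_mu2 (lex_prod G H) \<le> card ((\<lambda>C. C \<times> verts H) ` P)"
    using is_partition_Times[OF P(1)] by (intro chi_mu2_le) simp_all
  then show ?thesis using card_partition_Times[OF P(1) \<open>verts H \<noteq> {}\<close>] P(3) by simp
qed

lemma theta_exact_dist2_le_lex_prod:
  assumes "sgraph G" "sgraph H"
  shows "theta (exact_dist2 G) \<le> theta (exact_dist2 (lex_prod G H))"
proof -
  obtain Q where Q: "is_partition (verts G \<times> verts H) Q"
    "\<forall>X\<in>Q. is_clique (exact_dist2 (lex_prod G H)) X" "card Q = theta (exact_dist2 (lex_prod G H))"
    by (rule theta_attained[of "exact_dist2 (lex_prod G H)"]) simp
  obtain h where h: "h \<in> verts H" using assms(2) by (auto simp: sgraph_def)
  let ?slices = "(\<lambda>X. {g. (g, h) \<in> X}) ` Q"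
  have "finite Q" using Q(1) assms by (simp add: sgraph_def finite_partition)
  have "is_partition (verts (exact_dist2 G)) (?slices - {{}})"
    using is_partition_slice[OF Q(1) h] by simp
  moreover have "\<forall>C\<in>?slices - {{}}. is_clique (exact_dist2 G) C"
    using Q(2) clique_exact_dist2_slice[OF _ h, of G] by blast
  ultimately have "theta (exact_dist2 G) \<le> card (?slices - {{}})"
    by (rule theta_le)
  also have "\<dots> \<le> card ?slices"
    using \<open>finite Q\<close> by (intro card_mono) auto
  also have "\<dots> \<le> card Q"
    using \<open>finite Q\<close> by (rule card_image_le)
  finally show ?thesis using Q(3) by simp
qed

section \<open>Sharpness\<close>

definition complete_graph :: "'a set \<Rightarrow> 'a sgraph" where
  "complete_graph V = \<lparr>verts = V, adj = (\<lambda>u v. u \<noteq> v \<and> u \<in> V \<and> v \<in> V)\<rparr>"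

definition edgeless_graph :: "'a set \<Rightarrow> 'a sgraph" where
  "edgeless_graph V = \<lparr>verts = V, adj = (\<lambda>u v. False)\<rparr>"

lemma sgraph_complete_graph: "finite V \<Longrightarrow> V \<noteq> {} \<Longrightarrow> sgraph (complete_graph V)"
  by (auto simp: sgraph_def complete_graph_def)

lemma sgraph_edgeless_graph: "finite V \<Longrightarrow> V \<noteq> {} \<Longrightarrow> sgraph (edgeless_graph V)"
  by (auto simp: sgraph_def edgeless_graph_def)

lemma connected_complete_graph: "connected (complete_graph V)"
  unfolding connected_def
proof (intro ballI)
  fix u v assume "u \<in> verts (complete_graph V)" "v \<in> verts (complete_graph V)"
  then show "\<exists>xs. is_walk (complete_graph V) u v xs"
    using walk_length_0_iff[of "complete_graph V" u v] walk_length_1_iff[of "complete_graph V" u v]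
    by (cases "u = v") (auto simp: complete_graph_def)
qed

lemma theta_exact_dist2_complete:
  assumes "finite (verts X)" "\<And>u v. u \<in> verts X \<Longrightarrow> v \<in> verts X \<Longrightarrow> u \<noteq> v \<Longrightarrow> adj X u v"
  shows "theta (exact_dist2 X) = card (verts X)"
  using theta_edgeless[of "exact_dist2 X"] assms by (auto simp: adj_exact_dist2 dist_eq_2_iff)

abbreviation K2 :: "nat sgraph" where "K2 \<equiv> complete_graph {0, 1}"

lemma sgraph_K2: "sgraph K2"
  by (simp add: sgraph_complete_graph)

lemma card_verts_K2: "card (verts K2) = 2"
  by (simp add: complete_graph_def)

lemma theta_exact_dist2_K2: "theta (exact_dist2 K2) = 2"
  by (subst theta_exact_dist2_complete) (auto simp: complete_graph_def)

lemma chi_mu2_K2_lex_edgeless: "chi_mu2 (lex_prod K2 (edgeless_graph {0, 1 :: nat})) = 2"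
proof -
  let ?X = "lex_prod K2 (edgeless_graph {0, 1 :: nat})"
  have "chi_mu2 ?X \<le> 2"
    using chi_mu2_lex_prod_le_theta_exact_dist2[OF sgraph_K2 _ connected_complete_graph]
      sgraph_edgeless_graph[of "{0, 1 :: nat}"] card_verts_K2 theta_exact_dist2_K2
    by simp
  moreover have "\<not> mv2_set ?X (verts ?X)"
  proof
    assume "mv2_set ?X (verts ?X)"
    then have "(0, 0) = ((0, 1) :: nat \<times> nat) \<or> adj ?X (0, 0) (0, 1)"
      by (rule mv2_set_verts_imp_adj) (simp_all add: complete_graph_def edgeless_graph_def)
    then show False
      by (simp add: adj_lex_prod complete_graph_def edgeless_graph_def)
  qed
  then have "2 \<le> chi_mu2 ?X"
    by (intro two_le_chi_mu2) (simp add: complete_graph_def edgeless_graph_def)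
  ultimately show ?thesis by simp
qed

lemma theta_exact_dist2_K2_lex_K1: "theta (exact_dist2 (lex_prod K2 (edgeless_graph {0 :: nat}))) = 2"
  by (subst theta_exact_dist2_complete)
     (auto simp: adj_lex_prod complete_graph_def edgeless_graph_def)

theorem theorem4p1:
  shows "(\<forall>(G::'a sgraph) (H::'b sgraph).
            sgraph G \<and> sgraph H \<and> connected G \<and> card (verts G) \<ge> 2 \<longrightarrow>
              chi_mu2 (lex_prod G H) \<le> theta (exact_dist2 G)
              \<and> theta (exact_dist2 G) \<le> theta (exact_dist2 (lex_prod G H)))
       \<and> (\<exists>(G::nat sgraph) (H::nat sgraph).
            sgraph G \<and> sgraph H \<and> connected G \<and> card (verts G) \<ge> 2
            \<and> chi_mu2 (lex_prod G H) = theta (exact_dist2 G))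
       \<and> (\<exists>(G::nat sgraph) (H::nat sgraph).
            sgraph G \<and> sgraph H \<and> connected G \<and> card (verts G) \<ge> 2
            \<and> theta (exact_dist2 G) = theta (exact_dist2 (lex_prod G H)))"
proof -
  have "sgraph (edgeless_graph {0, 1 :: nat})" "sgraph (edgeless_graph {0 :: nat})"
    by (simp_all add: sgraph_edgeless_graph)
  then show ?thesis
    using chi_mu2_lex_prod_le_theta_exact_dist2 theta_exact_dist2_le_lex_prod
      sgraph_K2 connected_complete_graph card_verts_K2
      theta_exact_dist2_K2 chi_mu2_K2_lex_edgeless theta_exact_dist2_K2_lex_K1
    by (metis order_refl)
qed

end
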